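(* There is a constant $c$ such that for all binary strings $x,y$, $\mathrm{KP}(x\mid y)\le \min\{\mathrm{KP}(q) : [q](y)=x\}+c$. However, the difference $\min\{\mathrm{KP}(q) : [q](y)=x\}-\mathrm{KP}(x\mid y)$ is unbounded (over all pairs $x,y$).
   Context: A computable partial function $U(p,x)$ is prefix-free (in $p$) if for every $x$ the set of $p$ with $U(p,x)$ defined contains no string together with a proper prefix of it. $\mathrm{KP}(y\mid x)=\min\{|p|: U(p,x)=y\}$ for a prefix-free $U$ that is optimal (minimal up to an additive constant among prefix-free computable partial functions); the unconditional prefix complexity $\mathrm{KP}(q)$ is defined analogously with machines without a second argument. $[q](x)$ denotes the output of program $q$ on input $x$ in a fixed programming language (a computable numbering of all computable partial functions of one string argument with the $s$-$m$-$n$/Gödel property, i.e. programs in any other such language can be computably translated into it). *)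

theory Defs
  imports Main "HOL-Library.Extended_Nat"
begin

datatype recf = Z | S | Id nat | Cn recf "recf list" | Pr recf recf | Mn recf

inductive eval :: "recf \<Rightarrow> nat list \<Rightarrow> nat \<Rightarrow> bool" where
  ev_Z: "eval Z xs 0"
| ev_S: "eval S (x # xs) (Suc x)"
| ev_Id: "n < length xs \<Longrightarrow> eval (Id n) xs (xs ! n)"
| ev_Cn: "length ys = length gs \<Longrightarrow> (\<forall>i < length gs. eval (gs ! i) xs (ys ! i))
          \<Longrightarrow> eval f ys z \<Longrightarrow> eval (Cn f gs) xs z"
| ev_Pr0: "eval f xs y \<Longrightarrow> eval (Pr f g) (0 # xs) y"
| ev_PrS: "eval (Pr f g) (n # xs) y \<Longrightarrow> eval g (n # y # xs) z
          \<Longrightarrow> eval (Pr f g) (Suc n # xs) z"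
| ev_Mn: "eval f (y # xs) 0 \<Longrightarrow> (\<forall>z < y. \<exists>v. v \<noteq> 0 \<and> eval f (z # xs) v)
          \<Longrightarrow> eval (Mn f) xs y"

text \<open>Binary strings are bool lists; bijective encoding into nat.\<close>
fun enc :: "bool list \<Rightarrow> nat" where
  "enc [] = 0"
| "enc (b # xs) = 2 * enc xs + (if b then 2 else 1)"

definition computable1 :: "(bool list \<Rightarrow> bool list option) \<Rightarrow> bool" where
  "computable1 f \<longleftrightarrow> (\<exists>r. \<forall>x z. f x = Some z \<longleftrightarrow> eval r [enc x] (enc z))"

definition computable2 :: "(bool list \<Rightarrow> bool list \<Rightarrow> bool list option) \<Rightarrow> bool" where
  "computable2 f \<longleftrightarrow> (\<exists>r. \<forall>p x z. f p x = Some z \<longleftrightarrow> eval r [enc p, enc x] (enc z))"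

definition prefix_free2 :: "(bool list \<Rightarrow> bool list \<Rightarrow> bool list option) \<Rightarrow> bool" where
  "prefix_free2 U \<longleftrightarrow> (\<forall>x p q. U p x \<noteq> None \<and> U q x \<noteq> None \<and> (\<exists>r. q = p @ r) \<longrightarrow> p = q)"

definition prefix_free1 :: "(bool list \<Rightarrow> bool list option) \<Rightarrow> bool" where
  "prefix_free1 M \<longleftrightarrow> (\<forall>p q. M p \<noteq> None \<and> M q \<noteq> None \<and> (\<exists>r. q = p @ r) \<longrightarrow> p = q)"

text \<open>KP_U(y|x) = min length of p with U(p,x)=y (infinity if none).\<close>
definition KPc :: "(bool list \<Rightarrow> bool list \<Rightarrow> bool list option) \<Rightarrow> bool list \<Rightarrow> bool list \<Rightarrow> enat" where
  "KPc U y x = (INF p \<in> {p. U p x = Some y}. enat (length p))"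

definition KPu :: "(bool list \<Rightarrow> bool list option) \<Rightarrow> bool list \<Rightarrow> enat" where
  "KPu M y = (INF p \<in> {p. M p = Some y}. enat (length p))"

definition optimal_cond :: "(bool list \<Rightarrow> bool list \<Rightarrow> bool list option) \<Rightarrow> bool" where
  "optimal_cond U \<longleftrightarrow> computable2 U \<and> prefix_free2 U \<and>
     (\<forall>V. computable2 V \<and> prefix_free2 V \<longrightarrow> (\<exists>c::nat. \<forall>x y. KPc U y x \<le> KPc V y x + enat c))"

definition optimal_uncond :: "(bool list \<Rightarrow> bool list option) \<Rightarrow> bool" where
  "optimal_uncond M \<longleftrightarrow> computable1 M \<and> prefix_free1 M \<and>
     (\<forall>V. computable1 V \<and> prefix_free1 V \<longrightarrow> (\<exists>c::nat. \<forall>y. KPu M y \<le> KPu V y + enat c))"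

text \<open>nu q is the partial function computed by program q. A Goedel numbering is a
  computable numbering into which every computable numbering can be computably translated.\<close>
definition goedel_numbering :: "(bool list \<Rightarrow> bool list \<Rightarrow> bool list option) \<Rightarrow> bool" where
  "goedel_numbering nu \<longleftrightarrow> computable2 nu \<and>
     (\<forall>mu. computable2 mu \<longrightarrow>
        (\<exists>t. computable1 (\<lambda>q. Some (t q)) \<and> (\<forall>q. nu (t q) = mu q)))"

end

theory Submission
  imports Defs
begin

text \<open>A prefix-free program p for M whose output q satisfies [q](y) = x is itself a
  prefix-free description of x given y, for the machine p, y \<mapsto> [M(p)](y); this gives the
  upper bound. For unboundedness, the machine that on condition y outputs its own program p
  whenever y \<le> p \<le> 3y/2 (as numbers) is prefix-free. Taking y = 2^(k+1), each of the
  2^k strings x with 2^(k+1) \<le> x < 3 \<cdot> 2^k has length k + 1, so KP(x|y) \<le> k + O(1). If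
  min KP(q) exceeded KP(x|y) by at most d, these strings would need 2^k distinct M-programs
  of length at most k + O(1), for every k, which the Kraft inequality forbids for the
  prefix-free domain of M.\<close>

inductive_simps eval_Z [simp]: "eval Z xs v"
inductive_simps eval_S [simp]: "eval S (x # xs) v"
inductive_simps eval_Id [simp]: "eval (Id n) xs v"
inductive_simps eval_Cn: "eval (Cn f gs) xs v"
inductive_simps eval_Pr_0 [simp]: "eval (Pr f g) (0 # xs) v"
inductive_simps eval_Pr_Suc [simp]: "eval (Pr f g) (Suc n # xs) v"
inductive_simps eval_Mn: "eval (Mn f) xs v"

lemma eval_Cn_1 [simp]: "eval (Cn f [g]) xs v \<longleftrightarrow> (\<exists>u. eval g xs u \<and> eval f [u] v)"
proof
  assume "eval (Cn f [g]) xs v"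
  then obtain ys where "length ys = 1" "eval g xs (ys ! 0)" "eval f ys v"
    unfolding eval_Cn by auto
  then show "\<exists>u. eval g xs u \<and> eval f [u] v"
    by (metis One_nat_def length_0_conv length_Suc_conv nth_Cons_0)
next
  assume "\<exists>u. eval g xs u \<and> eval f [u] v"
  then obtain u where "eval g xs u" "eval f [u] v" by blast
  then show "eval (Cn f [g]) xs v"
    unfolding eval_Cn by (intro exI[of _ "[u]"]) auto
qed

lemma eval_Cn_2 [simp]:
  "eval (Cn f [g, h]) xs v \<longleftrightarrow> (\<exists>u w. eval g xs u \<and> eval h xs w \<and> eval f [u, w] v)"
proof
  assume "eval (Cn f [g, h]) xs v"
  then obtain ys where ys: "length ys = Suc (Suc 0)"
      "\<forall>i < Suc (Suc 0). eval ([g, h] ! i) xs (ys ! i)" "eval f ys v"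
    unfolding eval_Cn by (simp only: length_Cons list.size(3)) blast
  from ys(2) have "eval g xs (ys ! 0)" "eval h xs (ys ! 1)" by auto
  moreover have "ys = [ys ! 0, ys ! 1]"
    using ys(1) by (cases ys; cases "tl ys") auto
  ultimately show "\<exists>u w. eval g xs u \<and> eval h xs w \<and> eval f [u, w] v"
    using ys(3) by metis
next
  assume "\<exists>u w. eval g xs u \<and> eval h xs w \<and> eval f [u, w] v"
  then obtain u w where "eval g xs u" "eval h xs w" "eval f [u, w] v" by blast
  then show "eval (Cn f [g, h]) xs v"
    unfolding eval_Cn by (intro exI[of _ "[u, w]"]) (auto simp: less_Suc_eq nth_Cons')
qed

definition rf_add :: recf where
  "rf_add = Pr (Id 0) (Cn S [Id 1])"

lemma eval_rf_add [simp]: "eval rf_add [k, x] v \<longleftrightarrow> v = k + x"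
  unfolding rf_add_def by (induction k arbitrary: v) auto

definition rf_pred :: recf where
  "rf_pred = Pr Z (Id 0)"

lemma eval_rf_pred [simp]: "eval rf_pred [k] v \<longleftrightarrow> v = k - 1"
  unfolding rf_pred_def by (induction k arbitrary: v) auto

definition rf_monus :: recf where
  "rf_monus = Pr (Id 0) (Cn rf_pred [Id 1])"

lemma eval_rf_monus [simp]: "eval rf_monus [k, x] v \<longleftrightarrow> v = x - k"
  unfolding rf_monus_def by (induction k arbitrary: v) auto

text \<open>The minimisation ignores its search variable, so it halts (with value 0) exactly
  when r yields 0.\<close>
definition rf_restrict_id :: "recf \<Rightarrow> recf" where
  "rf_restrict_id r = Cn rf_add [Mn (Cn r [Id 1, Id 2]), Id 0]"

lemma eval_rf_restrict_id:
  assumes "\<And>e a v. eval r [e, a] v \<longleftrightarrow> v = g e a"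
  shows "eval (rf_restrict_id r) [e, a] v \<longleftrightarrow> v = e \<and> g e a = 0"
  unfolding rf_restrict_id_def by (auto simp: eval_Mn assms)

definition rf_window_test :: recf where
  "rf_window_test = Cn rf_add [Cn rf_monus [Id 0, Id 1],
     Cn rf_monus [Cn rf_add [Id 1, Cn rf_add [Id 1, Id 1]], Cn rf_add [Id 0, Id 0]]]"

lemma eval_rf_window_test: "eval rf_window_test [e, a] v \<longleftrightarrow> v = (a - e) + (2 * e - 3 * a)"
  unfolding rf_window_test_def by auto

fun dec :: "nat \<Rightarrow> bool list" where
  "dec 0 = []"
| "dec (Suc n) = odd n # dec (n div 2)"

lemma enc_dec [simp]: "enc (dec n) = n"
  by (induction n rule: dec.induct) auto

lemma dec_enc [simp]: "dec (enc x) = x"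
  by (induction x) auto

lemma inj_enc: "inj enc"
  by (rule inj_on_inverseI[of _ dec]) simp

lemma inj_dec: "inj dec"
  by (rule inj_on_inverseI[of _ enc]) simp

lemma enc_append: "enc (p @ r) = enc p + 2 ^ length p * enc r"
  by (induction p) auto

lemma two_power_length_le_enc: "2 ^ length p \<le> enc p + 1"
  by (induction p) auto

lemma enc_plus_two_le_two_power: "enc p + 2 \<le> 2 ^ (length p + 1)"
  by (induction p) auto

lemma computable2_restrict_id:
  assumes "\<And>e a v. eval r [e, a] v \<longleftrightarrow> v = g e a"
  shows "computable2 (\<lambda>p y. if g (enc p) (enc y) = 0 then Some p else None)"
  unfolding computable2_def using eval_rf_restrict_id[OF assms] inj_enc[THEN injD]
  by (intro exI[of _ "rf_restrict_id r"]) auto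

section \<open>Upper bound\<close>

lemma KPc_le_length: "V p y = Some x \<Longrightarrow> KPc V x y \<le> enat (length p)"
  unfolding KPc_def by (rule INF_lower) simp

lemma optimal_condD:
  "optimal_cond U \<Longrightarrow> computable2 V \<Longrightarrow> prefix_free2 V
    \<Longrightarrow> \<exists>c. \<forall>x y. KPc U x y \<le> KPc V x y + enat c"
  unfolding optimal_cond_def by blast

definition decode_and_run ::
    "('p \<Rightarrow> 'q option) \<Rightarrow> ('q \<Rightarrow> 'y \<Rightarrow> 'x option) \<Rightarrow> 'p \<Rightarrow> 'y \<Rightarrow> 'x option" where
  "decode_and_run M nu p y = Option.bind (M p) (\<lambda>q. nu q y)"

lemma computable2_decode_and_run:
  assumes "computable1 M" and "computable2 nu"
  shows "computable2 (decode_and_run M nu)"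
proof -
  obtain rM where rM: "\<And>p q. M p = Some q \<longleftrightarrow> eval rM [enc p] (enc q)"
    using assms(1) unfolding computable1_def by blast
  obtain rN where rN: "\<And>q y x. nu q y = Some x \<longleftrightarrow> eval rN [enc q, enc y] (enc x)"
    using assms(2) unfolding computable2_def by blast
  have "decode_and_run M nu p y = Some x
      \<longleftrightarrow> eval (Cn rN [Cn rM [Id 0], Id 1]) [enc p, enc y] (enc x)" for p y x
  proof -
    have "decode_and_run M nu p y = Some x \<longleftrightarrow> (\<exists>q. M p = Some q \<and> nu q y = Some x)"
      unfolding decode_and_run_def by (cases "M p") auto
    also have "\<dots> \<longleftrightarrow> (\<exists>u. eval rM [enc p] u \<and> eval rN [u, enc y] (enc x))"
      unfolding rM rN by (metis enc_dec)
    finally show ?thesis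
      by simp
  qed
  then show ?thesis
    unfolding computable2_def by blast
qed

lemma prefix_free2_decode_and_run: "prefix_free1 M \<Longrightarrow> prefix_free2 (decode_and_run M nu)"
  unfolding prefix_free1_def prefix_free2_def decode_and_run_def by (metis bind.bind_lzero)

lemma KPc_decode_and_run_le_INF_KPu:
  "KPc (decode_and_run M nu) x y \<le> (INF q\<in>{q. nu q y = Some x}. KPu M q)"
  unfolding KPu_def by (intro INF_greatest) (simp add: KPc_le_length decode_and_run_def)

lemma KPc_le_INF_KPu_plus_const:
  assumes "optimal_cond U" and "computable1 M" and "prefix_free1 M" and "computable2 nu"
  shows "\<exists>c::nat. \<forall>x y. KPc U x y \<le> (INF q\<in>{q. nu q y = Some x}. KPu M q) + enat c"
proof -
  obtain c where "\<forall>x y. KPc U x y \<le> KPc (decode_and_run M nu) x y + enat c"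
    using optimal_condD[OF assms(1) computable2_decode_and_run[OF assms(2,4)]
        prefix_free2_decode_and_run[OF assms(3)]]
    by blast
  then show ?thesis
    using KPc_decode_and_run_le_INF_KPu by (meson add_right_mono order_trans)
qed

section \<open>Kraft inequality\<close>

definition prefix_free_set :: "bool list set \<Rightarrow> bool" where
  "prefix_free_set D \<longleftrightarrow> (\<forall>p\<in>D. \<forall>q\<in>D. (\<exists>r. q = p @ r) \<longrightarrow> p = q)"

definition words_upto :: "bool list set \<Rightarrow> nat \<Rightarrow> bool list set" where
  "words_upto D L = {p \<in> D. length p \<le> L}"

lemma finite_words_upto: "finite (words_upto D L)"
  by (rule finite_subset[OF _ finite_lists_length_le[of "UNIV :: bool set" L]])
    (auto simp: words_upto_def)

lemma finite_words_length_eq: "finite {xs :: bool list. length xs = n}"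
  using finite_lists_length_eq[of "UNIV :: bool set" n] by simp

lemma card_words_length_eq: "card {xs :: bool list. length xs = n} = 2 ^ n"
  using card_lists_length_eq[of "UNIV :: bool set" n] by simp

lemma kraft_inequality:
  assumes "prefix_free_set D"
  shows "(\<Sum>p\<in>words_upto D L. 2 ^ (L - length p)) \<le> (2::nat) ^ L"
proof -
  define E where "E p = (\<lambda>r. p @ r) ` {r :: bool list. length r = L - length p}" for p
  have card_E: "card (E p) = 2 ^ (L - length p)" for p
    unfolding E_def by (subst card_image) (auto simp: inj_on_def card_words_length_eq)
  have disjoint: "E p \<inter> E q = {}"
    if "p \<in> words_upto D L" "q \<in> words_upto D L" "p \<noteq> q" for p q
  proof (rule ccontr)
    assume "E p \<inter> E q \<noteq> {}"
    then obtain r s where "p @ r = q @ s"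
      unfolding E_def by auto
    then have "(\<exists>u. q = p @ u) \<or> (\<exists>u. p = q @ u)"
      by (auto simp: append_eq_append_conv2)
    then show False
      using assms that unfolding prefix_free_set_def words_upto_def by blast
  qed
  have "(\<Sum>p\<in>words_upto D L. 2 ^ (L - length p)) = (\<Sum>p\<in>words_upto D L. card (E p))"
    by (simp add: card_E)
  also have "\<dots> = card (\<Union>(E ` words_upto D L))"
    by (rule card_UN_disjoint[symmetric])
      (use finite_words_upto disjoint in \<open>auto simp: E_def finite_words_length_eq\<close>)
  also have "\<dots> \<le> card {xs :: bool list. length xs = L}"
    by (rule card_mono[OF finite_words_length_eq]) (auto simp: E_def words_upto_def)
  finally show ?thesis
    by (simp add: card_words_length_eq)
qed

text \<open>This is 2^L times the partial Kraft sum minus the number of words counted. It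
  is bounded by 2^L but grows by at least the word count at each step, so a prefix-free set
  cannot keep 2^k words of length at most f + k for every k.\<close>
definition proper_extensions :: "bool list set \<Rightarrow> nat \<Rightarrow> nat" where
  "proper_extensions D L = (\<Sum>p\<in>words_upto D L. 2 ^ (L - length p) - 1)"

lemma proper_extensions_le: "prefix_free_set D \<Longrightarrow> proper_extensions D L \<le> 2 ^ L"
  unfolding proper_extensions_def by (rule order_trans[OF sum_mono kraft_inequality]) auto

lemma proper_extensions_Suc:
  "2 * proper_extensions D L + card (words_upto D L) \<le> proper_extensions D (Suc L)"
proof -
  have step: "(2::nat) ^ (Suc L - length p) - 1 = 2 * (2 ^ (L - length p) - 1) + 1"
    if "p \<in> words_upto D L" for p
  proof -
    have "Suc L - length p = Suc (L - length p)"
      using that by (simp add: words_upto_def Suc_diff_le)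
    moreover have "(1::nat) \<le> 2 ^ (L - length p)"
      by simp
    moreover have "\<And>t::nat. 1 \<le> t \<Longrightarrow> 2 * t - 1 = 2 * (t - 1) + 1"
      by arith
    ultimately show ?thesis
      by simp
  qed
  have "2 * proper_extensions D L + card (words_upto D L)
      = (\<Sum>p\<in>words_upto D L. 2 * (2 ^ (L - length p) - 1)) + (\<Sum>p\<in>words_upto D L. 1)"
    unfolding proper_extensions_def by (simp add: sum_distrib_left)
  also have "\<dots> = (\<Sum>p\<in>words_upto D L. 2 ^ (Suc L - length p) - 1)"
    unfolding sum.distrib[symmetric] by (rule sum.cong[OF refl]) (simp only: step)
  also have "\<dots> \<le> proper_extensions D (Suc L)"
    unfolding proper_extensions_def
    by (rule sum_mono2[OF finite_words_upto]) (auto simp: words_upto_def)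
  finally show ?thesis .
qed

lemma proper_extensions_growth:
  assumes "\<And>k. 2 ^ k \<le> card (words_upto D (f + k))"
  shows "k * 2 ^ k \<le> 2 * proper_extensions D (f + k)"
proof (induction k)
  case (Suc k)
  have "Suc k * 2 ^ Suc k = 2 * (k * 2 ^ k) + 2 * 2 ^ k"
    by simp
  also have "\<dots> \<le> 2 * (2 * proper_extensions D (f + k)) + 2 * card (words_upto D (f + k))"
    using Suc.IH assms[of k] by linarith
  also have "\<dots> \<le> 2 * proper_extensions D (f + Suc k)"
    using proper_extensions_Suc[of D "f + k"] by simp
  finally show ?case .
qed simp

lemma prefix_free_set_sparse:
  assumes "prefix_free_set D"
  shows "\<exists>k. card (words_upto D (f + k)) < 2 ^ k"
proof (rule ccontr)
  assume "\<not> ?thesis"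
  then have dense: "2 ^ k \<le> card (words_upto D (f + k))" for k
    by (simp add: not_less)
  define k :: nat where "k = 2 ^ (f + 1) + 1"
  have "k * 2 ^ k \<le> 2 * proper_extensions D (f + k)"
    by (rule proper_extensions_growth[OF dense])
  also have "\<dots> \<le> 2 ^ (f + 1) * 2 ^ k"
    using proper_extensions_le[OF assms, of "f + k"] by (simp add: power_add)
  finally show False
    unfolding k_def by simp
qed

lemma prefix_free_set_dom: "prefix_free1 M \<Longrightarrow> prefix_free_set (dom M)"
  unfolding prefix_free1_def prefix_free_set_def by blast

section \<open>Unboundedness\<close>

definition window_machine :: "bool list \<Rightarrow> bool list \<Rightarrow> bool list option" where
  "window_machine p y = (if enc y \<le> enc p \<and> 2 * enc p \<le> 3 * enc y then Some p else None)"

lemma computable2_window_machine: "computable2 window_machine"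
proof -
  have "window_machine = (\<lambda>p y. if (enc y - enc p) + (2 * enc p - 3 * enc y) = 0 then Some p else None)"
    unfolding window_machine_def by (intro ext) auto
  then show ?thesis
    using computable2_restrict_id[OF eval_rf_window_test] by simp
qed

lemma prefix_free2_window_machine: "prefix_free2 window_machine"
  unfolding prefix_free2_def
proof (intro allI impI)
  fix y p q
  assume "window_machine p y \<noteq> None \<and> window_machine q y \<noteq> None \<and> (\<exists>r. q = p @ r)"
  then obtain r where q: "q = p @ r" and low: "enc y \<le> enc p" and high: "2 * enc q \<le> 3 * enc y"
    unfolding window_machine_def by (auto split: if_splits)
  show "p = q"
  proof (rule ccontr)
    assume "p \<noteq> q"
    then have "1 \<le> enc r"
      using q by (cases r) auto
    then have "enc p + 2 ^ length p \<le> enc q"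
      using q enc_append by simp
    then show False
      using enc_plus_two_le_two_power[of p] low high by simp
  qed
qed

lemma card_le_card_words_upto_dom:
  assumes "\<forall>x\<in>X. (INF q\<in>{q. nu q y = Some x}. KPu M q) \<le> enat L"
  shows "card X \<le> card (words_upto (dom M) L)"
proof -
  have "\<exists>p. p \<in> words_upto (dom M) L \<and> decode_and_run M nu p y = Some x"
    if "x \<in> X" for x
  proof -
    have "(INF q\<in>{q. nu q y = Some x}. KPu M q) < enat (Suc L)"
      using assms that by (meson enat_ord_simps(2) lessI order_le_less_trans)
    then obtain q where q: "nu q y = Some x" "KPu M q < enat (Suc L)"
      unfolding INF_less_iff by blast
    then obtain p where "M p = Some q" "enat (length p) < enat (Suc L)"
      unfolding KPu_def INF_less_iff by blast
    with q show ?thesis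
      by (auto simp: words_upto_def decode_and_run_def)
  qed
  then obtain P where P: "\<And>x. x \<in> X \<Longrightarrow>
      P x \<in> words_upto (dom M) L \<and> decode_and_run M nu (P x) y = Some x"
    by metis
  have "inj_on P X"
    by (rule inj_onI) (metis P option.inject)
  moreover have "P ` X \<subseteq> words_upto (dom M) L"
    using P by blast
  ultimately show ?thesis
    using card_inj_on_le finite_words_upto by blast
qed

lemma KPc_window_machine:
  assumes "2 ^ (k + 1) \<le> j" and "j < 3 * 2 ^ k"
  shows "KPc window_machine (dec j) (dec (2 ^ (k + 1))) \<le> enat (k + 1)"
proof -
  have "length (dec j) \<le> k + 1"
  proof (rule ccontr)
    assume "\<not> ?thesis"
    then have "(2::nat) ^ (k + 2) \<le> 2 ^ length (dec j)"
      by (intro power_increasing) auto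
    also have "\<dots> \<le> j + 1"
      using two_power_length_le_enc[of "dec j"] by simp
    finally show False
      using assms(2) by simp
  qed
  moreover have "window_machine (dec j) (dec (2 ^ (k + 1))) = Some (dec j)"
    using assms unfolding window_machine_def by simp
  ultimately show ?thesis
    using KPc_le_length[of window_machine] order_trans enat_ord_simps(1) by blast
qed

lemma card_words_upto_dom_window:
  assumes c: "\<forall>x y. KPc U x y \<le> KPc window_machine x y + enat c"
    and bounded: "\<forall>x y. (INF q\<in>{q. nu q y = Some x}. KPu M q) \<le> KPc U x y + enat d"
  shows "2 ^ k \<le> card (words_upto (dom M) (c + d + 1 + k))"
proof -
  let ?J = "{2 ^ (k + 1)..<3 * 2 ^ k}" and ?y = "dec (2 ^ (k + 1))"
  have "(INF q\<in>{q. nu q ?y = Some x}. KPu M q) \<le> enat (c + d + 1 + k)" if "x \<in> dec ` ?J" for x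
  proof -
    obtain j where j: "j \<in> ?J" "x = dec j"
      using \<open>x \<in> dec ` ?J\<close> by blast
    have "KPc U x ?y \<le> enat (k + 1) + enat c"
      using c KPc_window_machine[of k j] j by (meson add_right_mono atLeastLessThan_iff order_trans)
    then have "KPc U x ?y + enat d \<le> enat (k + 1) + enat c + enat d"
      by (rule add_right_mono)
    then show ?thesis
      using bounded[rule_format, of ?y x] by (simp add: add.commute add.left_commute)
  qed
  then have "card (dec ` ?J) \<le> card (words_upto (dom M) (c + d + 1 + k))"
    by (intro card_le_card_words_upto_dom[where nu = nu and y = ?y]) blast
  moreover have "card (dec ` ?J) = 2 ^ k"
    by (simp add: card_image[OF inj_on_subset[OF inj_dec]])
  ultimately show ?thesis
    by simp
qed

lemma INF_KPu_minus_KPc_unbounded: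
  assumes "optimal_cond U" and "prefix_free1 M"
  shows "\<forall>d::nat. \<exists>x y. KPc U x y + enat d < (INF q\<in>{q. nu q y = Some x}. KPu M q)"
proof (rule allI, rule ccontr)
  fix d :: nat
  assume "\<not> (\<exists>x y. KPc U x y + enat d < (INF q\<in>{q. nu q y = Some x}. KPu M q))"
  then have bounded: "\<forall>x y. (INF q\<in>{q. nu q y = Some x}. KPu M q) \<le> KPc U x y + enat d"
    by (simp add: not_less)
  obtain c where c: "\<forall>x y. KPc U x y \<le> KPc window_machine x y + enat c"
    using optimal_condD[OF assms(1) computable2_window_machine prefix_free2_window_machine]
    by blast
  obtain k where "card (words_upto (dom M) (c + d + 1 + k)) < 2 ^ k"
    using prefix_free_set_sparse[OF prefix_free_set_dom[OF assms(2)]] by blast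
  then show False
    using card_words_upto_dom_window[OF c bounded, of k] by simp
qed

theorem proposition4:
  fixes U :: "bool list \<Rightarrow> bool list \<Rightarrow> bool list option"
    and M :: "bool list \<Rightarrow> bool list option"
    and nu :: "bool list \<Rightarrow> bool list \<Rightarrow> bool list option"
  assumes "optimal_cond U" and "optimal_uncond M" and "goedel_numbering nu"
  shows "(\<exists>c::nat. \<forall>x y. KPc U x y \<le> (INF q \<in> {q. nu q y = Some x}. KPu M q) + enat c)
       \<and> (\<forall>d::nat. \<exists>x y. KPc U x y + enat d < (INF q \<in> {q. nu q y = Some x}. KPu M q))"
proof
  have M: "computable1 M" "prefix_free1 M"
    using assms(2) unfolding optimal_uncond_def by blast+
  have "computable2 nu"
    using assms(3) unfolding goedel_numbering_def by blast
  then show "\<exists>c::nat. \<forall>x y. KPc U x y \<le> (INF q \<in> {q. nu q y = Some x}. KPu M q) + enat c"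
    by (rule KPc_le_INF_KPu_plus_const[OF assms(1) M])
  show "\<forall>d::nat. \<exists>x y. KPc U x y + enat d < (INF q \<in> {q. nu q y = Some x}. KPu M q)"
    by (rule INF_KPu_minus_KPc_unbounded[OF assms(1) M(2)])
qed

end
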